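(* Let $k\ge1$, let $\mathbf{T}_1,\dots,\mathbf{T}_k$ be finite trees, and let $A$ be a permutation (a bijective FDS). Then $C_k(\mathbf{T}_1,\dots,\mathbf{T}_k)\times A=(C_kA)(\mathbf{T}_1,\dots,\mathbf{T}_k)$.
   Context: A finite dynamical system (FDS) is a function $A:S_A\to S_A$ on a finite set, considered up to isomorphism of functional graphs (arcs $x\to A(x)$). The product $AB$ acts on $S_A\times S_B$ by $(a,b)\mapsto(A(a),B(b))$. $C_n$ is the FDS whose functional graph is a directed cycle of length $n$. A (finite) tree is a rooted in-tree: an acyclic weakly connected digraph with a root having no outgoing arc, every other vertex having one outgoing arc towards the root. For a permutation $B$ all of whose cycle lengths are multiples of $k$ and trees $\mathbf{T}_1,\dots,\mathbf{T}_k$, $B(\mathbf{T}_1,\dots,\mathbf{T}_k)$ denotes the FDS obtained by traversing each cycle of $B$ following the arrows from some starting state and, for the $i$-th state encountered ($i=1,2,\dots$), attaching a copy of $\mathbf{T}_{((i-1)\bmod k)+1}$ by identifying its root with that state (the tree's arcs keep pointing towards the root). Note that every cycle length of $C_kA$ is a multiple of $k$. *)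

theory Defs
  imports Main
begin

text \<open>A finite dynamical system (FDS) is represented by its finite state set and its
  transition function (only its values on the state set matter).\<close>
type_synonym 'a fds = "'a set \<times> ('a \<Rightarrow> 'a)"

definition is_fds :: "'a fds \<Rightarrow> bool" where
  "is_fds A \<longleftrightarrow> finite (fst A) \<and> (\<forall>x\<in>fst A. snd A x \<in> fst A)"

definition is_permutation_fds :: "'a fds \<Rightarrow> bool" where
  "is_permutation_fds A \<longleftrightarrow> is_fds A \<and> bij_betw (snd A) (fst A) (fst A)"

definition fds_iso :: "'a fds \<Rightarrow> 'b fds \<Rightarrow> bool" where
  "fds_iso A B \<longleftrightarrow> (\<exists>h. bij_betw h (fst A) (fst B) \<and>
      (\<forall>x\<in>fst A. h (snd A x) = snd B (h x)))"

definition fds_prod :: "'a fds \<Rightarrow> 'b fds \<Rightarrow> ('a \<times> 'b) fds" where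
  "fds_prod A B = (fst A \<times> fst B, map_prod (snd A) (snd B))"

definition cycle_fds :: "nat \<Rightarrow> nat fds" where
  "cycle_fds n = ({0..<n}, \<lambda>i. Suc i mod n)"

text \<open>The root is
  encoded as the unique vertex with \<open>parent r = r\<close> (it has no outgoing arc);
  every other vertex \<open>v\<close> has the arc \<open>v \<rightarrow> parent v\<close>, and every vertex reaches the
  root (acyclicity and weak connectedness).\<close>
type_synonym 't tree = "'t set \<times> ('t \<Rightarrow> 't) \<times> 't"

definition tree_verts :: "'t tree \<Rightarrow> 't set" where "tree_verts T = fst T"
definition tree_parent :: "'t tree \<Rightarrow> 't \<Rightarrow> 't" where "tree_parent T = fst (snd T)"
definition tree_root :: "'t tree \<Rightarrow> 't" where "tree_root T = snd (snd T)"

definition is_tree :: "'t tree \<Rightarrow> bool" where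
  "is_tree T \<longleftrightarrow> finite (tree_verts T) \<and> tree_root T \<in> tree_verts T \<and>
     (\<forall>v\<in>tree_verts T. tree_parent T v \<in> tree_verts T) \<and>
     tree_parent T (tree_root T) = tree_root T \<and>
     (\<forall>v\<in>tree_verts T. \<exists>n. (tree_parent T ^^ n) v = tree_root T)"

text \<open>A phase function for \<open>B\<close> modulo \<open>k\<close>: traversing each cycle of \<open>B\<close> from a
  chosen starting state (phase 0), the \<open>i\<close>-th state encountered (\<open>i = 1, 2, \<dots>\<close>)
  has phase \<open>(i - 1) mod k\<close>.  Such a function exists iff all cycle lengths of the
  permutation \<open>B\<close> are multiples of \<open>k\<close>; choosing one amounts to choosing the
  starting states.\<close>
definition is_phase :: "nat \<Rightarrow> 'a fds \<Rightarrow> ('a \<Rightarrow> nat) \<Rightarrow> bool" where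
  "is_phase k B \<phi> \<longleftrightarrow> (\<forall>x\<in>fst B. \<phi> x < k \<and> \<phi> (snd B x) = Suc (\<phi> x) mod k)"

definition the_phase :: "nat \<Rightarrow> 'a fds \<Rightarrow> 'a \<Rightarrow> nat" where
  "the_phase k B = (SOME \<phi>. is_phase k B \<phi>)"

text \<open>\<open>B(T_1,\<dots>,T_k)\<close>: to the state \<open>x\<close> of phase \<open>j\<close> a copy of \<open>T_(j+1)\<close> is attached
  by identifying its root with \<open>x\<close>.  States are pairs \<open>(x, v)\<close> with \<open>v\<close> a vertex of
  the tree attached at \<open>x\<close>; \<open>(x, root)\<close> plays the role of \<open>x\<close>.\<close>
definition attach_trees :: "nat \<Rightarrow> 'a fds \<Rightarrow> (nat \<Rightarrow> 't tree) \<Rightarrow> ('a \<times> 't) fds" where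
  "attach_trees k B T =
    (let \<phi> = the_phase k B; tr = (\<lambda>x. T (\<phi> x + 1)) in
     ({(x, v). x \<in> fst B \<and> v \<in> tree_verts (tr x)},
      \<lambda>(x, v). if v = tree_root (tr x)
               then (snd B x, tree_root (tr (snd B x)))
               else (x, tree_parent (tr x) v)))"

end

theory Submission
  imports Defs "HOL-Number_Theory.Cong"
begin

text \<open>Write \<open>f\<close> for the permutation \<open>A\<close>.  A state of \<open>C\<^sub>k(T\<^sub>1,\<dots>,T\<^sub>k) \<times> A\<close> is a triple
  \<open>((i, v), a)\<close> with \<open>v\<close> a vertex of the tree attached at position \<open>i\<close> of the cycle;
  it reaches the cycle after \<open>d = depth v\<close> steps, by which time its second coordinate
  has become \<open>f\<^sup>d a\<close>.  Hence \<open>((i, v), a) \<mapsto> ((i, f\<^sup>d a), v)\<close> is an isomorphism onto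
  \<open>(C\<^sub>k A)(T\<^sub>1,\<dots>,T\<^sub>k)\<close>, with the trees attached according to the phase \<open>i\<close> inherited
  from \<open>C\<^sub>k\<close>.  That the starting states of the cycles of \<open>C\<^sub>k A\<close> do not matter follows
  because two phase functions \<open>\<chi>\<^sub>1, \<chi>\<^sub>2\<close> of a permutation differ by a shift \<open>\<delta>\<close> that is
  constant on each cycle, and \<open>x \<mapsto> f\<^sup>\<delta> x\<close> is an automorphism carrying \<open>\<chi>\<^sub>2\<close> to \<open>\<chi>\<^sub>1\<close>.\<close>

lemma fds_iso_trans [trans]: "fds_iso A B \<Longrightarrow> fds_iso B C \<Longrightarrow> fds_iso A C"
  unfolding fds_iso_def
proof (elim exE conjE)
  fix h g
  assume h: "bij_betw h (fst A) (fst B)" "\<forall>x\<in>fst A. h (snd A x) = snd B (h x)"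
    and g: "bij_betw g (fst B) (fst C)" "\<forall>x\<in>fst B. g (snd B x) = snd C (g x)"
  then show "\<exists>f. bij_betw f (fst A) (fst C) \<and> (\<forall>x\<in>fst A. f (snd A x) = snd C (f x))"
    using bij_betw_trans[OF h(1) g(1)] by (intro exI[of _ "g \<circ> h"]) (auto simp: bij_betw_def)
qed

lemma is_fds_funpow_closed: "is_fds B \<Longrightarrow> x \<in> fst B \<Longrightarrow> (snd B ^^ n) x \<in> fst B"
  by (induction n) (auto simp: is_fds_def)

lemma is_permutation_cycle_fds: "is_permutation_fds (cycle_fds k)"
proof -
  let ?succ = "\<lambda>i. Suc i mod k"
  have maps_to: "?succ ` {0..<k} \<subseteq> {0..<k}" by auto
  have inj: "inj_on ?succ {0..<k}"
    by (rule inj_onI) (metis atLeastLessThan_iff mod_Suc mod_if nat.distinct(1) nat.inject)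
  have "?succ ` {0..<k} = {0..<k}" by (rule endo_inj_surj[OF _ maps_to inj]) simp
  with inj show ?thesis
    unfolding is_permutation_fds_def is_fds_def cycle_fds_def bij_betw_def by auto
qed

lemma is_permutation_fds_prod:
  "is_permutation_fds A \<Longrightarrow> is_permutation_fds B \<Longrightarrow> is_permutation_fds (fds_prod A B)"
  unfolding is_permutation_fds_def is_fds_def fds_prod_def
  by (auto intro: bij_betw_map_prod)

lemma is_phase_the_phase: "is_phase k B \<phi> \<Longrightarrow> is_phase k B (the_phase k B)"
  unfolding the_phase_def by (rule someI[of "is_phase k B"])

lemma is_phase_cycle_fds: "is_phase k (cycle_fds k) id"
  unfolding is_phase_def cycle_fds_def by auto

lemma is_phase_fds_prod_fst: "is_phase k B \<phi> \<Longrightarrow> is_phase k (fds_prod B A) (\<phi> \<circ> fst)"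
  unfolding is_phase_def fds_prod_def by auto

lemma is_phase_funpow:
  assumes "is_fds B" "is_phase k B \<phi>" "x \<in> fst B"
  shows "\<phi> ((snd B ^^ n) x) = (\<phi> x + n) mod k"
proof (induction n)
  case 0
  then show ?case using assms(2,3) by (simp add: is_phase_def)
next
  case (Suc n)
  then show ?case
    using assms is_fds_funpow_closed[OF assms(1,3), of n] by (simp add: is_phase_def mod_Suc_eq)
qed

lemma mod_add_left_cancel_less:
  fixes a d d' k :: nat
  assumes "d < k" "d' < k" "(a + d) mod k = (a + d') mod k"
  shows "d = d'"
  using assms cong_add_lcancel_nat[of a d d' k] cong_less_modulus_unique_nat[of d d' k]
  by (simp add: cong_def)

lemma phase_difference:
  assumes B: "is_fds B" and \<chi>1: "is_phase k B \<chi>1" and \<chi>2: "is_phase k B \<chi>2"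
  obtains \<delta> where "\<forall>x\<in>fst B. \<delta> (snd B x) = \<delta> x" "\<forall>x\<in>fst B. (\<chi>2 x + \<delta> x) mod k = \<chi>1 x"
proof
  let ?f = "snd B"
  define \<delta> where "\<delta> x = (\<chi>1 x + (k - \<chi>2 x)) mod k" for x
  have \<chi>1_less: "\<chi>1 x < k" and \<chi>2_less: "\<chi>2 x < k" if "x \<in> fst B" for x
    using \<chi>1 \<chi>2 that unfolding is_phase_def by auto
  have \<delta>_less: "\<delta> x < k" if "x \<in> fst B" for x
    using \<chi>1_less[OF that] unfolding \<delta>_def by simp
  have shift: "(\<chi>2 x + \<delta> x) mod k = \<chi>1 x" if "x \<in> fst B" for x
  proof -
    have "(\<chi>2 x + \<delta> x) mod k = (\<chi>1 x + k) mod k"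
      unfolding \<delta>_def using \<chi>2_less[OF that] by (simp add: mod_add_right_eq)
    then show ?thesis using \<chi>1_less[OF that] by simp
  qed
  then show "\<forall>x\<in>fst B. (\<chi>2 x + \<delta> x) mod k = \<chi>1 x" by blast
  show "\<forall>x\<in>fst B. \<delta> (?f x) = \<delta> x"
  proof
    fix x assume x: "x \<in> fst B"
    have fx: "?f x \<in> fst B" using B x by (simp add: is_fds_def)
    have "(\<chi>2 (?f x) + \<delta> x) mod k = Suc ((\<chi>2 x + \<delta> x) mod k) mod k"
      using \<chi>2 x unfolding is_phase_def by (simp add: mod_simps)
    also have "\<dots> = \<chi>1 (?f x)"
      using \<chi>1 x shift[OF x] unfolding is_phase_def by simp
    also have "\<dots> = (\<chi>2 (?f x) + \<delta> (?f x)) mod k"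
      using shift[OF fx] by simp
    finally have "\<delta> x = \<delta> (?f x)"
      by (rule mod_add_left_cancel_less[OF \<delta>_less[OF x] \<delta>_less[OF fx]])
    then show "\<delta> (?f x) = \<delta> x" ..
  qed
qed

lemma phase_shift_automorphism:
  assumes B: "is_permutation_fds B" and \<chi>1: "is_phase k B \<chi>1" and \<chi>2: "is_phase k B \<chi>2"
  obtains g where "bij_betw g (fst B) (fst B)" "\<forall>x\<in>fst B. g (snd B x) = snd B (g x)"
    "\<forall>x\<in>fst B. \<chi>2 (g x) = \<chi>1 x"
proof -
  let ?f = "snd B" and ?S = "fst B"
  have fds: "is_fds B" and bij: "bij_betw ?f ?S ?S"
    using B unfolding is_permutation_fds_def by auto
  obtain \<delta> where \<delta>_step: "\<forall>x\<in>?S. \<delta> (?f x) = \<delta> x"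
    and \<delta>_shift: "\<forall>x\<in>?S. (\<chi>2 x + \<delta> x) mod k = \<chi>1 x"
    using phase_difference[OF fds \<chi>1 \<chi>2] .
  have \<delta>_funpow: "\<delta> ((?f ^^ n) x) = \<delta> x" if "x \<in> ?S" for x n
    using \<delta>_step by (induction n) (simp_all add: is_fds_funpow_closed[OF fds that])
  define g where "g x = (?f ^^ \<delta> x) x" for x
  have g_closed: "g ` ?S \<subseteq> ?S"
    unfolding g_def using is_fds_funpow_closed[OF fds] by auto
  have g_inj: "inj_on g ?S"
  proof (rule inj_onI)
    fix x y assume x: "x \<in> ?S" and y: "y \<in> ?S" and gxy: "g x = g y"
    have "\<delta> x = \<delta> y" using gxy \<delta>_funpow[OF x] \<delta>_funpow[OF y] unfolding g_def by metis
    then have "(?f ^^ \<delta> x) x = (?f ^^ \<delta> x) y" using gxy unfolding g_def by simp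
    then show "x = y"
      using bij_betw_funpow[OF bij, of "\<delta> x"] x y by (auto simp: bij_betw_def dest: inj_onD)
  qed
  have "g ` ?S = ?S"
    using fds g_closed g_inj by (intro endo_inj_surj) (auto simp: is_fds_def)
  with g_inj have "bij_betw g ?S ?S" by (simp add: bij_betw_def)
  moreover have "\<forall>x\<in>?S. g (?f x) = ?f (g x)"
    unfolding g_def using \<delta>_step by (simp add: funpow_swap1)
  moreover have "\<forall>x\<in>?S. \<chi>2 (g x) = \<chi>1 x"
    unfolding g_def using is_phase_funpow[OF fds \<chi>2] \<delta>_shift by simp
  ultimately show ?thesis by (rule that)
qed

definition tree_depth :: "'t tree \<Rightarrow> 't \<Rightarrow> nat" where
  "tree_depth T v = (LEAST n. (tree_parent T ^^ n) v = tree_root T)"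

lemma tree_depth_root: "tree_depth T (tree_root T) = 0"
  unfolding tree_depth_def by (rule Least_eq_0) simp

lemma tree_depth_parent:
  assumes "is_tree T" "v \<in> tree_verts T" "v \<noteq> tree_root T"
  shows "tree_depth T v = Suc (tree_depth T (tree_parent T v))"
proof -
  let ?p = "tree_parent T" and ?r = "tree_root T"
  have reaches_root: "(?p ^^ n) v = ?r \<Longrightarrow> (?p ^^ tree_depth T v) v = ?r" for n v
    unfolding tree_depth_def by (rule LeastI)
  obtain n where "(?p ^^ n) v = ?r" using assms(1,2) unfolding is_tree_def by blast
  then have v_root: "(?p ^^ tree_depth T v) v = ?r" by (rule reaches_root)
  then obtain m where m: "tree_depth T v = Suc m"
    using assms(3) by (cases "tree_depth T v") auto
  then have pv_root: "(?p ^^ m) (?p v) = ?r" using v_root by (simp add: funpow_swap1)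
  then have "tree_depth T (?p v) \<le> m"
    unfolding tree_depth_def by (rule Least_le)
  moreover have "(?p ^^ Suc (tree_depth T (?p v))) v = ?r"
    using reaches_root[OF pv_root] by (simp add: funpow_swap1)
  then have "tree_depth T v \<le> Suc (tree_depth T (?p v))"
    unfolding tree_depth_def by (rule Least_le)
  ultimately show ?thesis using m by simp
qed

definition attach_trees_phase :: "('a \<Rightarrow> nat) \<Rightarrow> 'a fds \<Rightarrow> (nat \<Rightarrow> 't tree) \<Rightarrow> ('a \<times> 't) fds" where
  "attach_trees_phase \<phi> B T =
    (let tr = (\<lambda>x. T (\<phi> x + 1)) in
     ({(x, v). x \<in> fst B \<and> v \<in> tree_verts (tr x)},
      \<lambda>(x, v). if v = tree_root (tr x)
               then (snd B x, tree_root (tr (snd B x)))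
               else (x, tree_parent (tr x) v)))"

lemma attach_trees_eq_attach_trees_phase:
  "attach_trees k B T = attach_trees_phase (the_phase k B) B T"
  unfolding attach_trees_def attach_trees_phase_def by (simp add: Let_def)

lemma fst_attach_trees_phase:
  "fst (attach_trees_phase \<phi> B T) = (SIGMA x:fst B. tree_verts (T (\<phi> x + 1)))"
  unfolding attach_trees_phase_def by (auto simp: Let_def)

lemma snd_attach_trees_phase:
  "snd (attach_trees_phase \<phi> B T) (x, v) =
     (if v = tree_root (T (\<phi> x + 1))
      then (snd B x, tree_root (T (\<phi> (snd B x) + 1)))
      else (x, tree_parent (T (\<phi> x + 1)) v))"
  unfolding attach_trees_phase_def by (simp add: Let_def)

lemma fds_iso_attach_trees_phase:
  assumes B: "is_fds B" and g: "bij_betw g (fst B) (fst B')"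
    and g_hom: "\<forall>x\<in>fst B. g (snd B x) = snd B' (g x)"
    and g_phase: "\<forall>x\<in>fst B. \<chi>' (g x) = \<chi> x"
  shows "fds_iso (attach_trees_phase \<chi> B T) (attach_trees_phase \<chi>' B' T)"
  unfolding fds_iso_def
proof (intro exI[of _ "map_prod g id"] conjI)
  have g_onto: "g ` fst B = fst B'" and g_inj: "inj_on g (fst B)"
    using g by (auto simp: bij_betw_def)
  have "map_prod g id ` (SIGMA x:fst B. tree_verts (T (\<chi> x + 1))) =
      (SIGMA y:fst B'. tree_verts (T (\<chi>' y + 1)))"
  proof (intro equalityI subsetI)
    fix p assume "p \<in> map_prod g id ` (SIGMA x:fst B. tree_verts (T (\<chi> x + 1)))"
    then show "p \<in> (SIGMA y:fst B'. tree_verts (T (\<chi>' y + 1)))"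
      using g_onto g_phase by auto
  next
    fix p assume "p \<in> (SIGMA y:fst B'. tree_verts (T (\<chi>' y + 1)))"
    then obtain y v where p: "p = (y, v)" "y \<in> fst B'" "v \<in> tree_verts (T (\<chi>' y + 1))"
      by auto
    then obtain x where "x \<in> fst B" "y = g x"
      using g_onto by auto
    then show "p \<in> map_prod g id ` (SIGMA x:fst B. tree_verts (T (\<chi> x + 1)))"
      using p g_phase by (auto simp: image_iff intro!: bexI[of _ "(x, v)"])
  qed
  moreover have "inj_on (map_prod g id) (SIGMA x:fst B. tree_verts (T (\<chi> x + 1)))"
    using g_inj by (auto simp: inj_on_def)
  ultimately show "bij_betw (map_prod g id) (fst (attach_trees_phase \<chi> B T))
      (fst (attach_trees_phase \<chi>' B' T))"
    by (simp add: fst_attach_trees_phase bij_betw_def)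
  have "map_prod g id (snd (attach_trees_phase \<chi> B T) (x, v)) =
      snd (attach_trees_phase \<chi>' B' T) (g x, v)" if x: "x \<in> fst B" for x v
  proof -
    have "snd B x \<in> fst B" using B x by (simp add: is_fds_def)
    then have "\<chi>' (snd B' (g x)) = \<chi> (snd B x)" using g_hom g_phase x by metis
    then show ?thesis using g_hom g_phase x by (simp add: snd_attach_trees_phase)
  qed
  then show "\<forall>p\<in>fst (attach_trees_phase \<chi> B T). map_prod g id (snd (attach_trees_phase \<chi> B T) p) =
      snd (attach_trees_phase \<chi>' B' T) (map_prod g id p)"
    by (clarsimp simp: fst_attach_trees_phase)
qed

lemma bij_betw_fiberwise_shift:
  assumes "\<forall>x\<in>X. \<forall>v\<in>V x. bij_betw (e x v) S S"
  shows "bij_betw (\<lambda>((x, v), a). ((x, e x v a), v)) ((SIGMA x:X. V x) \<times> S) (SIGMA p:X \<times> S. V (fst p))"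
  unfolding bij_betw_def
proof
  show "inj_on (\<lambda>((x, v), a). ((x, e x v a), v)) ((SIGMA x:X. V x) \<times> S)"
  proof (rule inj_onI)
    fix p q
    assume "p \<in> (SIGMA x:X. V x) \<times> S" "q \<in> (SIGMA x:X. V x) \<times> S"
      and "(\<lambda>((x, v), a). ((x, e x v a), v)) p = (\<lambda>((x, v), a). ((x, e x v a), v)) q"
    then obtain x v a a' where "p = ((x, v), a)" "q = ((x, v), a')" "x \<in> X" "v \<in> V x"
        "a \<in> S" "a' \<in> S" "e x v a = e x v a'"
      by auto
    then show "p = q"
      using assms by (auto simp: bij_betw_def dest: inj_onD)
  qed
  show "(\<lambda>((x, v), a). ((x, e x v a), v)) ` ((SIGMA x:X. V x) \<times> S) = (SIGMA p:X \<times> S. V (fst p))"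
  proof (intro equalityI subsetI)
    fix q assume "q \<in> (\<lambda>((x, v), a). ((x, e x v a), v)) ` ((SIGMA x:X. V x) \<times> S)"
    then show "q \<in> (SIGMA p:X \<times> S. V (fst p))"
      using assms by (force simp: bij_betw_def)
  next
    fix q assume "q \<in> (SIGMA p:X \<times> S. V (fst p))"
    then obtain x b v where q: "q = ((x, b), v)" "x \<in> X" "b \<in> S" "v \<in> V x"
      by auto
    then obtain a where "a \<in> S" "b = e x v a"
      using assms unfolding bij_betw_def by force
    then show "q \<in> (\<lambda>((x, v), a). ((x, e x v a), v)) ` ((SIGMA x:X. V x) \<times> S)"
      using q by (auto simp: image_iff intro!: bexI[of _ "((x, v), a)"])
  qed
qed

lemma fds_prod_attach_trees_phase_iso:
  assumes trees: "\<forall>x\<in>fst B. is_tree (T (\<phi> x + 1))"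
    and A: "bij_betw (snd A) (fst A) (fst A)"
  shows "fds_iso (fds_prod (attach_trees_phase \<phi> B T) A)
                 (attach_trees_phase (\<phi> \<circ> fst) (fds_prod B A) T)"
  unfolding fds_iso_def
proof (intro exI conjI)
  let ?f = "snd A"
  define d where "d x v = tree_depth (T (\<phi> x + 1)) v" for x v
  define h where "h = (\<lambda>((x, v), a). ((x, (?f ^^ d x v) a), v))"
  have "bij_betw h ((SIGMA x:fst B. tree_verts (T (\<phi> x + 1))) \<times> fst A)
      (SIGMA p:fst B \<times> fst A. tree_verts (T (\<phi> (fst p) + 1)))"
    unfolding h_def by (rule bij_betw_fiberwise_shift) (simp add: bij_betw_funpow[OF A])
  then show "bij_betw h (fst (fds_prod (attach_trees_phase \<phi> B T) A))
      (fst (attach_trees_phase (\<phi> \<circ> fst) (fds_prod B A) T))"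
    by (simp add: fds_prod_def fst_attach_trees_phase)
  have "h (snd (fds_prod (attach_trees_phase \<phi> B T) A) ((x, v), a)) =
      snd (attach_trees_phase (\<phi> \<circ> fst) (fds_prod B A) T) (h ((x, v), a))"
    if x: "x \<in> fst B" and v: "v \<in> tree_verts (T (\<phi> x + 1))" for x v a
  proof (cases "v = tree_root (T (\<phi> x + 1))")
    case True
    have "h ((y, tree_root (T (\<phi> y + 1))), b) = ((y, b), tree_root (T (\<phi> y + 1)))" for y b
      by (simp add: h_def d_def tree_depth_root)
    with True show ?thesis
      by (simp add: fds_prod_def snd_attach_trees_phase)
  next
    case False
    have "d x v = Suc (d x (tree_parent (T (\<phi> x + 1)) v))"
      unfolding d_def using trees x v False by (simp add: tree_depth_parent)
    with False show ?thesis
      by (simp add: h_def fds_prod_def snd_attach_trees_phase funpow_swap1)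
  qed
  then show "\<forall>p\<in>fst (fds_prod (attach_trees_phase \<phi> B T) A).
      h (snd (fds_prod (attach_trees_phase \<phi> B T) A) p) =
      snd (attach_trees_phase (\<phi> \<circ> fst) (fds_prod B A) T) (h p)"
    by (clarsimp simp: fds_prod_def fst_attach_trees_phase)
qed

theorem mainTheorem9:
  fixes k :: nat and T :: "nat \<Rightarrow> 't tree" and A :: "'a fds"
  assumes "k \<ge> 1"
    and "\<forall>i\<in>{1..k}. is_tree (T i)"
    and "is_permutation_fds A"
  shows "fds_iso (fds_prod (attach_trees k (cycle_fds k) T) A)
                 (attach_trees k (fds_prod (cycle_fds k) A) T)"
proof -
  let ?C = "cycle_fds k" and ?CA = "fds_prod (cycle_fds k) A"
  let ?\<phi> = "the_phase k ?C"
  have \<phi>: "is_phase k ?C ?\<phi>" by (rule is_phase_the_phase[OF is_phase_cycle_fds])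
  then have trees: "\<forall>i\<in>fst ?C. is_tree (T (?\<phi> i + 1))"
    using assms(2) by (auto simp: is_phase_def)
  have perm: "is_permutation_fds ?CA"
    by (rule is_permutation_fds_prod[OF is_permutation_cycle_fds assms(3)])
  have "is_phase k ?CA (the_phase k ?CA)"
    by (rule is_phase_the_phase[OF is_phase_fds_prod_fst[OF is_phase_cycle_fds]])
  then obtain g where g: "bij_betw g (fst ?CA) (fst ?CA)"
      "\<forall>x\<in>fst ?CA. g (snd ?CA x) = snd ?CA (g x)"
      "\<forall>x\<in>fst ?CA. the_phase k ?CA (g x) = (?\<phi> \<circ> fst) x"
    by (rule phase_shift_automorphism[OF perm is_phase_fds_prod_fst[OF \<phi>]])
  have "bij_betw (snd A) (fst A) (fst A)"
    using assms(3) by (simp add: is_permutation_fds_def)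
  then have "fds_iso (fds_prod (attach_trees k ?C T) A) (attach_trees_phase (?\<phi> \<circ> fst) ?CA T)"
    unfolding attach_trees_eq_attach_trees_phase by (rule fds_prod_attach_trees_phase_iso[OF trees])
  also have "fds_iso (attach_trees_phase (?\<phi> \<circ> fst) ?CA T) (attach_trees k ?CA T)"
    unfolding attach_trees_eq_attach_trees_phase
    using perm g by (intro fds_iso_attach_trees_phase) (simp_all add: is_permutation_fds_def)
  finally show ?thesis .
qed

end
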